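(* Let $\mathbf z=(z_i)_{i=1}^N$ be a crystal. Then for every $\mathbf h=(h_i)_{i=1}^N\in(\mathbb R^d)^N$, $$(\mathbf h,\mathrm{Hess}H(\mathbf z)\mathbf h)=\frac{\check c}{a^2}\sum_{\langle i,j\rangle}(h_i-h_j,z_i-z_j)^2\ge0,$$ where the sum is over all pairs $\{i,j\}$ with $|z_i-z_j|=a$.
   Context: Let $d\ge1$ and $U\in C^3_0(\mathbb R)$ even, with a unique $a>0$ such that $U(a)=\min_{r\ge0}U(r)$, and $\check c:=U''(a)>0$; $U(x)=U(|x|)$ for $x\in\mathbb R^d$; $b=\inf\{r>0:U(s)=0\text{ for all }s>r\}$. $H(\mathbf x)=\sum_{1\le i<j\le N}U(x_i-x_j)$ for $\mathbf x\in(\mathbb R^d)^N$. A crystal is $\mathbf z\in(\mathbb R^d)^N$ such that for every $i\ne j$, $|z_i-z_j|=a$ or $|z_i-z_j|>b$. $\mathrm{Hess}H(\mathbf x)=(\partial^2H/\partial x_i^\alpha\partial x_j^\beta)$ and $(\mathbf h,\mathrm{Hess}H(\mathbf x)\mathbf h)=\sum_{i,j}\sum_{\alpha,\beta}\frac{\partial^2H}{\partial x_i^\alpha\partial x_j^\beta}(\mathbf x)h_i^\alpha h_j^\beta$. *)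

theory Defs
  imports "HOL-Analysis.Analysis"
begin

definition C3 :: "(real \<Rightarrow> real) \<Rightarrow> bool" where
  "C3 U \<longleftrightarrow> (\<forall>k<3. \<forall>x. ((deriv ^^ k) U) differentiable (at x))
              \<and> continuous_on UNIV ((deriv ^^ 3) U)"

definition C3_0 :: "(real \<Rightarrow> real) \<Rightarrow> bool" where
  "C3_0 U \<longleftrightarrow> C3 U \<and> bounded {x. U x \<noteq> 0}"

definition cutoff :: "(real \<Rightarrow> real) \<Rightarrow> real" where
  "cutoff U = Inf {r. r > 0 \<and> (\<forall>s>r. U s = 0)}"

definition energy :: "(real \<Rightarrow> real) \<Rightarrow> nat \<Rightarrow> (nat \<Rightarrow> real^'d) \<Rightarrow> real" where
  "energy U N x = (\<Sum>i<N. \<Sum>j\<in>{i<..<N}. U (norm (x i - x j)))"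

definition pderiv_conf ::
  "nat \<Rightarrow> 'd \<Rightarrow> ((nat \<Rightarrow> real^'d) \<Rightarrow> real) \<Rightarrow> (nat \<Rightarrow> real^'d) \<Rightarrow> real" where
  "pderiv_conf i \<alpha> F x = deriv (\<lambda>t. F (x(i := x i + t *\<^sub>R axis \<alpha> 1))) 0"

definition hess_form ::
  "nat \<Rightarrow> ((nat \<Rightarrow> real^'d::finite) \<Rightarrow> real) \<Rightarrow> (nat \<Rightarrow> real^'d) \<Rightarrow> (nat \<Rightarrow> real^'d) \<Rightarrow> real" where
  "hess_form N F x h = (\<Sum>i<N. \<Sum>j<N. \<Sum>\<alpha>\<in>UNIV. \<Sum>\<beta>\<in>UNIV.
      pderiv_conf i \<alpha> (pderiv_conf j \<beta> F) x * (h i $ \<alpha>) * (h j $ \<beta>))"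

definition crystal :: "real \<Rightarrow> real \<Rightarrow> nat \<Rightarrow> (nat \<Rightarrow> real^'d) \<Rightarrow> bool" where
  "crystal a b N z \<longleftrightarrow> (\<forall>i<N. \<forall>j<N. i \<noteq> j \<longrightarrow> norm (z i - z j) = a \<or> norm (z i - z j) > b)"

end

theory Submission
  imports Defs
begin

text \<open>Displacing particle \<open>i\<close> by \<open>t e\<close> changes every pair difference \<open>z\<^sub>p - z\<^sub>q\<close>
  by \<open>t (\<delta>\<^sub>i\<^sub>p - \<delta>\<^sub>i\<^sub>q) e\<close>, so every second partial derivative of \<open>H\<close> is a sum over pairs
  of second directional derivatives of \<open>v \<mapsto> U |v|\<close>. In a crystal each pair distance is
  a critical point of \<open>U\<close>: it is either the minimiser \<open>a\<close> or lies beyond the cutoff \<open>b\<close>,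
  where \<open>U\<close> vanishes identically. At a critical radius the second derivative of
  \<open>U |v|\<close> is the rank-one form \<open>U''(|v|) (v\<cdot>w)(v\<cdot>u) / |v|\<^sup>2\<close>, which moreover vanishes
  beyond \<open>b\<close>; summing it against \<open>h\<close> over particles and coordinates gives
  \<open>U''(a)/a\<^sup>2 ((h\<^sub>p - h\<^sub>q)\<cdot>(z\<^sub>p - z\<^sub>q))\<^sup>2\<close> for each bond.\<close>

lemma has_real_derivative_norm_line:
  fixes v w :: "'a::real_inner"
  assumes "v \<noteq> 0"
  shows "((\<lambda>t. norm (v + t *\<^sub>R w)) has_real_derivative (v \<bullet> w) / norm v) (at 0)"
proof -
  have line: "((\<lambda>t::real. v + t *\<^sub>R w) has_derivative (\<lambda>t. t *\<^sub>R w)) (at 0)"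
    by (auto intro!: derivative_eq_intros)
  have "(norm has_derivative (\<lambda>y. y \<bullet> sgn v)) (at (v + 0 *\<^sub>R w))"
    using has_derivative_norm[OF assms] by simp
  from has_derivative_compose[OF line this] show ?thesis
    unfolding has_field_derivative_def
    by (rule has_derivative_eq_rhs) (auto simp: sgn_div_norm inner_commute fun_eq_iff field_simps)
qed

lemma has_real_derivative_radial_line:
  fixes v w :: "'a::real_inner"
  assumes "DERIV f (norm v) :> f'" "v \<noteq> 0"
  shows "((\<lambda>t. f (norm (v + t *\<^sub>R w))) has_real_derivative f' * (v \<bullet> w) / norm v) (at 0)"
proof -
  have "DERIV f (norm (v + 0 *\<^sub>R w)) :> f'" using assms(1) by simp
  from DERIV_chain2[OF this has_real_derivative_norm_line[OF assms(2)]] show ?thesis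
    by simp
qed

lemma has_real_derivative_radial_slope_line:
  fixes v w u :: "'a::real_inner"
  assumes "DERIV g (norm v) :> g'" "g (norm v) = 0" "v \<noteq> 0"
  shows "((\<lambda>t. g (norm (v + t *\<^sub>R w)) * ((v + t *\<^sub>R w) \<bullet> u) / norm (v + t *\<^sub>R w))
           has_real_derivative g' / (norm v)\<^sup>2 * (v \<bullet> w) * (v \<bullet> u)) (at 0)"
proof -
  have "((\<lambda>t. (v + t *\<^sub>R w) \<bullet> u) has_real_derivative w \<bullet> u) (at 0)"
    by (auto intro!: derivative_eq_intros simp: inner_add_left)
  from DERIV_mult[OF has_real_derivative_radial_line[OF assms(1,3)] this]
  have "((\<lambda>t. g (norm (v + t *\<^sub>R w)) * ((v + t *\<^sub>R w) \<bullet> u)) has_real_derivative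
          g' * (v \<bullet> w) / norm v * (v \<bullet> u)) (at 0)"
    using assms(2) by simp
  from DERIV_divide[OF this has_real_derivative_norm_line[OF assms(3)]] show ?thesis
    using assms(2,3) by (simp add: power2_eq_square)
qed

lemma eventually_nhds_line_nonzero:
  fixes v w :: "'a::real_normed_vector"
  assumes "v \<noteq> 0"
  shows "\<forall>\<^sub>F t in nhds 0. v + t *\<^sub>R w \<noteq> 0"
proof (rule tendsto_imp_eventually_ne)
  show "((\<lambda>t. v + t *\<^sub>R w) \<longlongrightarrow> v) (nhds 0)"
    by (auto intro!: tendsto_eq_intros filterlim_ident)
qed (fact assms)

definition incidence :: "nat \<Rightarrow> nat \<Rightarrow> nat \<Rightarrow> real" where
  "incidence i p q = of_bool (i = p) - of_bool (i = q)"

lemma displace_diff: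
  fixes x :: "nat \<Rightarrow> 'a::real_vector"
  assumes "p \<noteq> q"
  shows "(x(i := x i + t *\<^sub>R e)) p - (x(i := x i + t *\<^sub>R e)) q
           = (x p - x q) + t *\<^sub>R (incidence i p q *\<^sub>R e)"
  using assms by (cases "i = p"; cases "i = q") (auto simp: incidence_def)

lemma sum_incidence:
  fixes X :: "nat \<Rightarrow> real"
  assumes "p < N" "q < N"
  shows "(\<Sum>i<N. incidence i p q * X i) = X p - X q"
  using assms by (simp add: incidence_def left_diff_distrib sum_subtractf)

lemma sum_pairs_displace:
  fixes x :: "nat \<Rightarrow> 'a::real_vector"
  shows "(\<Sum>p<N. \<Sum>q\<in>{p<..<N}. F p q ((x(i := x i + t *\<^sub>R e)) p - (x(i := x i + t *\<^sub>R e)) q))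
           = (\<Sum>p<N. \<Sum>q\<in>{p<..<N}. F p q ((x p - x q) + t *\<^sub>R (incidence i p q *\<^sub>R e)))"
  by (intro sum.cong refl arg_cong[where f = "F _ _"] displace_diff) auto

lemma energy_displace:
  fixes x :: "nat \<Rightarrow> real^'d::finite"
  shows "energy U N (x(i := x i + t *\<^sub>R e))
           = (\<Sum>p<N. \<Sum>q\<in>{p<..<N}. U (norm ((x p - x q) + t *\<^sub>R (incidence i p q *\<^sub>R e))))"
  unfolding energy_def by (rule sum_pairs_displace[where F = "\<lambda>_ _ v. U (norm v)"])

lemma pderiv_energy:
  fixes x :: "nat \<Rightarrow> real^'d::finite"
  assumes "\<And>s. U differentiable (at s)"
    and "\<And>p q. p < q \<Longrightarrow> q < N \<Longrightarrow> x p \<noteq> x q"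
  shows "pderiv_conf j \<beta> (energy U N) x
           = (\<Sum>p<N. \<Sum>q\<in>{p<..<N}. deriv U (norm (x p - x q))
                * ((x p - x q) \<bullet> (incidence j p q *\<^sub>R axis \<beta> 1)) / norm (x p - x q))"
  unfolding pderiv_conf_def energy_displace
  by (rule DERIV_imp_deriv, intro DERIV_sum has_real_derivative_radial_line)
    (use assms in \<open>auto simp: DERIV_deriv_iff_real_differentiable\<close>)

lemma eventually_nhds_displace_distinct:
  fixes x :: "nat \<Rightarrow> 'a::real_normed_vector"
  assumes "\<And>p q. p < q \<Longrightarrow> q < N \<Longrightarrow> x p \<noteq> x q"
  shows "\<forall>\<^sub>F t in nhds 0. \<forall>p\<in>{..<N}. \<forall>q\<in>{p<..<N}.
           (x(i := x i + t *\<^sub>R e)) p \<noteq> (x(i := x i + t *\<^sub>R e)) q"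
proof -
  have "\<forall>\<^sub>F t in nhds 0. (x(i := x i + t *\<^sub>R e)) p \<noteq> (x(i := x i + t *\<^sub>R e)) q"
    if "p < q" "q < N" for p q
  proof -
    have "\<forall>\<^sub>F t in nhds 0. (x p - x q) + t *\<^sub>R (incidence i p q *\<^sub>R e) \<noteq> 0"
      using assms[OF that] by (intro eventually_nhds_line_nonzero) simp
    then show ?thesis
      by eventually_elim (metis displace_diff less_imp_neq[OF \<open>p < q\<close>] right_minus_eq)
  qed
  then show ?thesis
    by (intro eventually_ball_finite finite_lessThan finite_greaterThanLessThan ballI) auto
qed

lemma pderiv_pderiv_energy:
  fixes z :: "nat \<Rightarrow> real^'d::finite"
  assumes U_diff: "\<And>s. U differentiable (at s)"
    and U'_diff: "\<And>s. deriv U differentiable (at s)"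
    and distinct: "\<And>p q. p < q \<Longrightarrow> q < N \<Longrightarrow> z p \<noteq> z q"
    and critical: "\<And>p q. p < q \<Longrightarrow> q < N \<Longrightarrow> deriv U (norm (z p - z q)) = 0"
  shows "pderiv_conf i \<alpha> (pderiv_conf j \<beta> (energy U N)) z
           = (\<Sum>p<N. \<Sum>q\<in>{p<..<N}. deriv (deriv U) (norm (z p - z q))
                / (norm (z p - z q))\<^sup>2 * ((z p - z q) \<bullet> (incidence i p q *\<^sub>R axis \<alpha> 1))
                * ((z p - z q) \<bullet> (incidence j p q *\<^sub>R axis \<beta> 1)))"
proof -
  define w where "w p q = incidence i p q *\<^sub>R axis \<alpha> (1::real)" for p q
  define u where "u p q = incidence j p q *\<^sub>R axis \<beta> (1::real)" for p q
  define G where "G t = (\<Sum>p<N. \<Sum>q\<in>{p<..<N}. deriv U (norm ((z p - z q) + t *\<^sub>R w p q))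
      * (((z p - z q) + t *\<^sub>R w p q) \<bullet> u p q) / norm ((z p - z q) + t *\<^sub>R w p q))" for t
  \<comment> \<open>\<open>pderiv_energy\<close> needs distinct particles, so it applies only near \<open>t = 0\<close>.\<close>
  have "\<forall>\<^sub>F t in nhds 0. \<forall>p\<in>{..<N}. \<forall>q\<in>{p<..<N}.
          (z(i := z i + t *\<^sub>R axis \<alpha> 1)) p \<noteq> (z(i := z i + t *\<^sub>R axis \<alpha> 1)) q"
    using distinct by (rule eventually_nhds_displace_distinct)
  then have "\<forall>\<^sub>F t in nhds 0. pderiv_conf j \<beta> (energy U N) (z(i := z i + t *\<^sub>R axis \<alpha> 1)) = G t"
  proof eventually_elim
    case (elim t)
    let ?y = "z(i := z i + t *\<^sub>R axis \<alpha> 1)"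
    have "pderiv_conf j \<beta> (energy U N) ?y = (\<Sum>p<N. \<Sum>q\<in>{p<..<N}.
        deriv U (norm (?y p - ?y q)) * ((?y p - ?y q) \<bullet> u p q) / norm (?y p - ?y q))"
      unfolding u_def using elim by (intro pderiv_energy U_diff) auto
    also have "\<dots> = G t"
      unfolding G_def w_def
      by (rule sum_pairs_displace[where F = "\<lambda>p q v. deriv U (norm v) * (v \<bullet> u p q) / norm v"])
    finally show ?case .
  qed
  then have "pderiv_conf i \<alpha> (pderiv_conf j \<beta> (energy U N)) z = deriv G 0"
    unfolding pderiv_conf_def[of i \<alpha>] by (rule deriv_cong_ev) simp
  also have "deriv G 0 = (\<Sum>p<N. \<Sum>q\<in>{p<..<N}. deriv (deriv U) (norm (z p - z q))
                / (norm (z p - z q))\<^sup>2 * ((z p - z q) \<bullet> w p q) * ((z p - z q) \<bullet> u p q))"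
    unfolding G_def
    by (rule DERIV_imp_deriv, intro DERIV_sum has_real_derivative_radial_slope_line)
      (use distinct critical U'_diff in \<open>auto simp: DERIV_deriv_iff_real_differentiable\<close>)
  finally show ?thesis unfolding w_def u_def .
qed

lemma quadratic_form_rank_one:
  fixes K :: "'a::comm_ring_1"
  shows "(\<Sum>i\<in>I. \<Sum>j\<in>I. \<Sum>\<alpha>\<in>A. \<Sum>\<beta>\<in>A. K * g i \<alpha> * g j \<beta> * x i \<alpha> * x j \<beta>)
           = K * (\<Sum>i\<in>I. \<Sum>\<alpha>\<in>A. g i \<alpha> * x i \<alpha>)\<^sup>2"
proof -
  have "(\<Sum>i\<in>I. \<Sum>\<alpha>\<in>A. g i \<alpha> * x i \<alpha>) * (\<Sum>j\<in>I. \<Sum>\<beta>\<in>A. g j \<beta> * x j \<beta>)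
      = (\<Sum>i\<in>I. \<Sum>j\<in>I. \<Sum>\<alpha>\<in>A. \<Sum>\<beta>\<in>A. (g i \<alpha> * x i \<alpha>) * (g j \<beta> * x j \<beta>))"
    by (simp only: sum_product)
  then show ?thesis
    by (simp only: power2_eq_square sum_distrib_left) (simp add: mult_ac)
qed

lemma inner_incidence_axis_sum:
  fixes v :: "real^'d::finite"
  assumes "p < N" "q < N"
  shows "(\<Sum>i<N. \<Sum>\<alpha>\<in>UNIV. (v \<bullet> (incidence i p q *\<^sub>R axis \<alpha> 1)) * h i $ \<alpha>) = (h p - h q) \<bullet> v"
proof -
  have "(\<Sum>i<N. \<Sum>\<alpha>\<in>UNIV. (v \<bullet> (incidence i p q *\<^sub>R axis \<alpha> 1)) * h i $ \<alpha>)
      = (\<Sum>i<N. incidence i p q * (h i \<bullet> v))"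
    by (simp add: inner_axis inner_vec_def[of "h _"] sum_distrib_left mult_ac)
  also have "\<dots> = h p \<bullet> v - h q \<bullet> v"
    using assms by (rule sum_incidence)
  finally show ?thesis by (simp add: inner_diff_left)
qed

lemma sum_swap_pairs:
  "(\<Sum>i\<in>I. \<Sum>p<N. \<Sum>q\<in>{p<..<N}. f i p q) = (\<Sum>p<N. \<Sum>q\<in>{p<..<N}. \<Sum>i\<in>I. f i p q)"
  by (subst sum.swap) (simp add: sum.swap[of _ I])

lemma hess_form_energy_critical:
  fixes z h :: "nat \<Rightarrow> real^'d::finite"
  assumes "\<And>s. U differentiable (at s)"
    and "\<And>s. deriv U differentiable (at s)"
    and "\<And>p q. p < q \<Longrightarrow> q < N \<Longrightarrow> z p \<noteq> z q"
    and "\<And>p q. p < q \<Longrightarrow> q < N \<Longrightarrow> deriv U (norm (z p - z q)) = 0"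
  shows "hess_form N (energy U N) z h
           = (\<Sum>p<N. \<Sum>q\<in>{p<..<N}. deriv (deriv U) (norm (z p - z q)) / (norm (z p - z q))\<^sup>2
                * ((h p - h q) \<bullet> (z p - z q))\<^sup>2)"
proof -
  let ?K = "\<lambda>p q. deriv (deriv U) (norm (z p - z q)) / (norm (z p - z q))\<^sup>2"
  let ?g = "\<lambda>p q i \<alpha>. (z p - z q) \<bullet> (incidence i p q *\<^sub>R axis \<alpha> 1)"
  have "hess_form N (energy U N) z h = (\<Sum>i<N. \<Sum>j<N. \<Sum>\<alpha>\<in>UNIV. \<Sum>\<beta>\<in>UNIV.
      (\<Sum>p<N. \<Sum>q\<in>{p<..<N}. ?K p q * ?g p q i \<alpha> * ?g p q j \<beta>) * h i $ \<alpha> * h j $ \<beta>)"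
    unfolding hess_form_def by (simp only: pderiv_pderiv_energy[OF assms])
  also have "\<dots> = (\<Sum>p<N. \<Sum>q\<in>{p<..<N}. \<Sum>i<N. \<Sum>j<N. \<Sum>\<alpha>\<in>UNIV. \<Sum>\<beta>\<in>UNIV.
      ?K p q * ?g p q i \<alpha> * ?g p q j \<beta> * h i $ \<alpha> * h j $ \<beta>)"
    by (simp only: sum_distrib_right sum_swap_pairs)
  also have "\<dots> = (\<Sum>p<N. \<Sum>q\<in>{p<..<N}. ?K p q * ((h p - h q) \<bullet> (z p - z q))\<^sup>2)"
    by (intro sum.cong refl)
      (simp only: quadratic_form_rank_one, subst inner_incidence_axis_sum, auto)
  finally show ?thesis .
qed

lemma C3_imp_differentiable:
  assumes "C3 U"
  shows "U differentiable (at x)" and "deriv U differentiable (at x)"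
proof -
  have "(deriv ^^ k) U differentiable (at x)" if "k < 3" for k
    using assms that unfolding C3_def by blast
  from this[of 0] this[of 1] show "U differentiable (at x)" "deriv U differentiable (at x)"
    by simp_all
qed

lemma vanishes_beyond_cutoff:
  assumes "bounded {x. U x \<noteq> 0}" "s > cutoff U"
  shows "U s = 0"
proof -
  obtain M where M: "\<And>x. U x \<noteq> 0 \<Longrightarrow> norm x \<le> M"
    using assms(1) unfolding bounded_iff by auto
  have "\<bar>M\<bar> + 1 \<in> {r. r > 0 \<and> (\<forall>s>r. U s = 0)}"
    using M by force
  then obtain r where "r > 0" "\<forall>s>r. U s = 0" "r < s"
    using cInf_lessD[of "{r. r > 0 \<and> (\<forall>s>r. U s = 0)}" s] assms(2)
    unfolding cutoff_def by blast
  then show ?thesis by simp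
qed

lemma deriv_eq_0_beyond:
  fixes f :: "real \<Rightarrow> real"
  assumes "\<And>s. s > b \<Longrightarrow> f s = 0" "s > b"
  shows "deriv f s = 0"
proof -
  have "\<forall>\<^sub>F x in nhds s. f x = 0"
    using eventually_nhds_in_open[of "{b<..}" s] assms by (auto elim: eventually_mono)
  then have "deriv f s = deriv (\<lambda>_. 0) s"
    by (rule deriv_cong_ev) simp
  then show ?thesis by simp
qed

lemma unique_level_le_cutoff:
  assumes "bounded {x. U x \<noteq> 0}" "0 \<le> a" "\<And>r. 0 \<le> r \<Longrightarrow> U r = U a \<Longrightarrow> r = a"
  shows "a \<le> cutoff U"
proof (rule ccontr)
  assume "\<not> a \<le> cutoff U"
  then have "U (a + 1) = U a"
    using vanishes_beyond_cutoff[OF assms(1)] by simp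
  then show False
    using assms(2) assms(3)[of "a + 1"] by simp
qed

theorem lemma2p1:
  fixes U :: "real \<Rightarrow> real" and a :: real and N :: nat
    and z h :: "nat \<Rightarrow> real^'d::finite"
  assumes U_C3: "C3_0 U"
    and U_even: "\<forall>x. U (- x) = U x"
    and a_pos: "a > 0"
    and a_min: "\<forall>r\<ge>0. U a \<le> U r"
    and a_unique: "\<forall>r\<ge>0. U r = U a \<longrightarrow> r = a"
    and c_pos: "deriv (deriv U) a > 0"
    and z_crystal: "crystal a (cutoff U) N z"
  shows "hess_form N (energy U N) z h
           = deriv (deriv U) a / a\<^sup>2 *
             (\<Sum>i<N. \<Sum>j\<in>{i<..<N}. if norm (z i - z j) = a
                 then ((h i - h j) \<bullet> (z i - z j))\<^sup>2 else 0)
         \<and> hess_form N (energy U N) z h \<ge> 0"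
proof -
  have C3: "C3 U" and support: "bounded {x. U x \<noteq> 0}"
    using U_C3 by (auto simp: C3_0_def)
  have a_le_cutoff: "a \<le> cutoff U"
    using support a_pos a_unique by (intro unique_level_le_cutoff) auto
  have U'_far: "deriv U s = 0" and U''_far: "deriv (deriv U) s = 0" if "s > cutoff U" for s
    using that vanishes_beyond_cutoff[OF support]
    by (blast intro: deriv_eq_0_beyond)+
  have "DERIV U a :> deriv U a"
    using C3_imp_differentiable(1)[OF C3] by (simp add: DERIV_deriv_iff_real_differentiable)
  then have U'_a: "deriv U a = 0"
    by (rule DERIV_local_min[OF _ a_pos]) (use a_min in auto)
  have pair: "norm (z p - z q) = a \<or> norm (z p - z q) > cutoff U" if "p < q" "q < N" for p q
    using z_crystal that unfolding crystal_def by auto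
  have "hess_form N (energy U N) z h
      = (\<Sum>p<N. \<Sum>q\<in>{p<..<N}. deriv (deriv U) (norm (z p - z q)) / (norm (z p - z q))\<^sup>2
           * ((h p - h q) \<bullet> (z p - z q))\<^sup>2)"
    using C3_imp_differentiable[OF C3]
  proof (rule hess_form_energy_critical)
    fix p q assume "p < q" "q < N"
    with pair show "z p \<noteq> z q" and "deriv U (norm (z p - z q)) = 0"
      using a_pos a_le_cutoff U'_a U'_far by force+
  qed
  also have "\<dots> = deriv (deriv U) a / a\<^sup>2 *
      (\<Sum>i<N. \<Sum>j\<in>{i<..<N}. if norm (z i - z j) = a then ((h i - h j) \<bullet> (z i - z j))\<^sup>2 else 0)"
    unfolding sum_distrib_left using pair U''_far by (intro sum.cong refl) auto
  finally show ?thesis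
    using c_pos by (simp add: sum_nonneg)
qed

end
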